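(* Consider proportional reinsurance with $I=1$, $m(t,y,u)=p-q+qu$, $\sigma(t,y,u)=\sigma_0u$, $p<q$, $\sigma_0>0$, and the exponential utility $U(x)=-e^{-\beta x}$ with $\beta>0$. Under the ansatz $V(t,x,y)=U(x)\tilde V(t,y)$, the optimal strategy is $(u^*(t,y),a^*(t,y))$ with $$u^*(t,y)=\begin{cases}0,&(t,y)\in A_0,\\ \dfrac{(\sigma_1(t,y)^2+\sigma_2(t,y)^2)q-\mu(t,y)\sigma_0\sigma_1(t,y)}{\sigma_0^2\sigma_2(t,y)^2\beta},&(t,y)\in(A_0\cup A_1)^c,\\ 1,&(t,y)\in A_1,\end{cases}$$ where $A_0=\{(t,y)\in[0,T]\times\mathbb R: q<\frac{\mu(t,y)\sigma_1(t,y)\sigma_0}{\sigma_1(t,y)^2+\sigma_2(t,y)^2}\}$, $A_1=\{(t,y)\in[0,T]\times\mathbb R: q>\frac{\sigma_0[\sigma_2(t,y)^2\sigma_0\beta+\mu(t,y)\sigma_1(t,y)]}{\sigma_1(t,y)^2+\sigma_2(t,y)^2}\}$, and $$a^*(t,y)=\frac{\mu(t,y)-\beta\sigma_0u^*(t,y)\sigma_1(t,y)}{\beta(\sigma_1(t,y)^2+\sigma_2(t,y)^2)}.$$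
   Context: Independent Brownian motions $W^1,W^2,W^Y$; environmental process $dY_t=\mu_Y(t,Y_t)dt+\sigma_Y(t,Y_t)dW^Y_t$ with bounded Lipschitz $C^1$ coefficients; $\mu,\sigma_1,\sigma_2$ bounded continuous positive Lipschitz functions of $(t,y)$ with $\sigma_1+\sigma_2$ bounded away from zero. With retention $u_t\in[0,1]$ and amount $a_t$ invested in the risky asset, the surplus is $dX_t=\{m(t,Y_t,u_t)+a_t\mu(t,Y_t)\}dt+\{\sigma(t,Y_t,u_t)+a_t\sigma_1(t,Y_t)\}dW^1_t+a_t\sigma_2(t,Y_t)dW^2_t$, and the insurer maximises $\mathbb E[U(X_T)]$ over adapted strategies with $\mathbb E\int_0^Ta_t^2dt<\infty$; $V(t,x,y)$ denotes the value function with HJB equation $0=V_t+\sup_{u,a}[\{m+a\mu\}V_x+\frac12\{(\sigma+a\sigma_1)^2+a^2\sigma_2^2\}V_{xx}]+\mu_YV_y+\frac12\sigma_Y^2V_{yy}$. The optimal strategy here means the maximiser in this HJB equation under the ansatz $V(t,x,y)=U(x)\tilde V(t,y)$ for some function $\tilde V$. *)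

theory Defs
  imports "HOL-Analysis.Analysis"
begin

definition expU :: "real \<Rightarrow> real \<Rightarrow> real" where
  "expU beta x = - exp (- beta * x)"

definition lipschitz2 :: "(real \<Rightarrow> real \<Rightarrow> real) \<Rightarrow> bool" where
  "lipschitz2 f \<longleftrightarrow> (\<exists>L. \<forall>t y t' y'. \<bar>f t y - f t' y'\<bar> \<le> L * (\<bar>t - t'\<bar> + \<bar>y - y'\<bar>))"

definition bounded2 :: "(real \<Rightarrow> real \<Rightarrow> real) \<Rightarrow> bool" where
  "bounded2 f \<longleftrightarrow> (\<exists>B. \<forall>t y. \<bar>f t y\<bar> \<le> B)"

definition hjb_ham ::
  "(real \<Rightarrow> real \<Rightarrow> real) \<Rightarrow> (real \<Rightarrow> real \<Rightarrow> real) \<Rightarrow> (real \<Rightarrow> real \<Rightarrow> real)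
   \<Rightarrow> (real \<Rightarrow> real \<Rightarrow> real \<Rightarrow> real) \<Rightarrow> (real \<Rightarrow> real \<Rightarrow> real \<Rightarrow> real)
   \<Rightarrow> real \<Rightarrow> real \<Rightarrow> real \<Rightarrow> real \<Rightarrow> real \<Rightarrow> real \<Rightarrow> real" where
  "hjb_ham mu sig1 sig2 m sig t y Vx Vxx u a =
     (m t y u + a * mu t y) * Vx
     + 1/2 * ((sig t y u + a * sig1 t y)^2 + a^2 * (sig2 t y)^2) * Vxx"

definition A0 :: "real \<Rightarrow> (real \<Rightarrow> real \<Rightarrow> real) \<Rightarrow> (real \<Rightarrow> real \<Rightarrow> real) \<Rightarrow> (real \<Rightarrow> real \<Rightarrow> real)
   \<Rightarrow> real \<Rightarrow> real \<Rightarrow> (real \<times> real) set" where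
  "A0 T mu sig1 sig2 sig0 q =
     {(t, y). t \<in> {0..T} \<and>
        q < mu t y * sig1 t y * sig0 / ((sig1 t y)^2 + (sig2 t y)^2)}"

definition A1 :: "real \<Rightarrow> (real \<Rightarrow> real \<Rightarrow> real) \<Rightarrow> (real \<Rightarrow> real \<Rightarrow> real) \<Rightarrow> (real \<Rightarrow> real \<Rightarrow> real)
   \<Rightarrow> real \<Rightarrow> real \<Rightarrow> real \<Rightarrow> (real \<times> real) set" where
  "A1 T mu sig1 sig2 sig0 beta q =
     {(t, y). t \<in> {0..T} \<and>
        q > sig0 * ((sig2 t y)^2 * sig0 * beta + mu t y * sig1 t y) / ((sig1 t y)^2 + (sig2 t y)^2)}"

definition ustar :: "real \<Rightarrow> (real \<Rightarrow> real \<Rightarrow> real) \<Rightarrow> (real \<Rightarrow> real \<Rightarrow> real) \<Rightarrow> (real \<Rightarrow> real \<Rightarrow> real)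
   \<Rightarrow> real \<Rightarrow> real \<Rightarrow> real \<Rightarrow> real \<Rightarrow> real \<Rightarrow> real" where
  "ustar T mu sig1 sig2 sig0 beta q t y =
     (if (t, y) \<in> A0 T mu sig1 sig2 sig0 q then 0
      else if (t, y) \<in> A1 T mu sig1 sig2 sig0 beta q then 1
      else (((sig1 t y)^2 + (sig2 t y)^2) * q - mu t y * sig0 * sig1 t y)
           / (sig0^2 * (sig2 t y)^2 * beta))"

definition astar :: "real \<Rightarrow> (real \<Rightarrow> real \<Rightarrow> real) \<Rightarrow> (real \<Rightarrow> real \<Rightarrow> real) \<Rightarrow> (real \<Rightarrow> real \<Rightarrow> real)
   \<Rightarrow> real \<Rightarrow> real \<Rightarrow> real \<Rightarrow> real \<Rightarrow> real \<Rightarrow> real" where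
  "astar T mu sig1 sig2 sig0 beta q t y =
     (mu t y - beta * sig0 * ustar T mu sig1 sig2 sig0 beta q t y * sig1 t y)
     / (beta * ((sig1 t y)^2 + (sig2 t y)^2))"

end

theory Submission
  imports Defs
begin

text \<open>Under the ansatz the derivatives satisfy V_xx = -beta V_x with V_x > 0, so the HJB
  Hamiltonian is a positive multiple of a strictly concave quadratic in (u, a). Its maximiser over
  [0,1] x R is characterised by the first-order conditions: the a-derivative vanishes, which
  gives a* as a function of u*, and after substituting a*, the u-derivative is an affine,
  strictly decreasing function of u whose root, projected onto [0,1], is u*. The sets A0 and A1
  are exactly where that root lies below 0 and above 1. The argument is pointwise in (t, y).\<close>

definition clip_root :: "real \<Rightarrow> real \<Rightarrow> real" where
  "clip_root \<alpha> \<gamma> = (if \<alpha> < 0 then 0 else if \<alpha> > \<gamma> then 1 else \<alpha> / \<gamma>)"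

lemma clip_root_mem:
  assumes "\<gamma> > 0"
  shows "clip_root \<alpha> \<gamma> \<in> {0..1}"
  using assms by (auto simp: clip_root_def)

lemma clip_root_variational:
  assumes "\<gamma> > 0" and "u \<in> {0..1}"
  shows "(\<alpha> - \<gamma> * clip_root \<alpha> \<gamma>) * (u - clip_root \<alpha> \<gamma>) \<le> 0"
  using assms by (auto simp: clip_root_def mult_nonpos_nonneg mult_nonneg_nonpos)

definition reduced_ham :: "real \<Rightarrow> real \<Rightarrow> real \<Rightarrow> real \<Rightarrow> real \<Rightarrow> real \<Rightarrow> real \<Rightarrow> real \<Rightarrow> real \<Rightarrow> real"
  where "reduced_ham p q k m w1 w2 b u a =
    (p - q + q*u + a*m) - b/2 * ((k*u + a*w1)^2 + a^2*w2^2)"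

lemma reduced_ham_expansion:
  "reduced_ham p q k m w1 w2 b u a - reduced_ham p q k m w1 w2 b u' a' =
     (q - b*k*(k*u' + a'*w1)) * (u - u') + (m - b*(k*u' + a'*w1)*w1 - b*a'*w2^2) * (a - a')
     - b/2 * ((k*(u - u') + w1*(a - a'))^2 + w2^2*(a - a')^2)"
  unfolding reduced_ham_def by (simp add: algebra_simps power2_eq_square)

lemma reduced_ham_strict_max:
  assumes "b > 0" "k \<noteq> 0" "w2 \<noteq> 0"
    and foc_a: "m - b*(k*u' + a'*w1)*w1 - b*a'*w2^2 = 0"
    and foc_u: "(q - b*k*(k*u' + a'*w1)) * (u - u') \<le> 0"
    and "(u, a) \<noteq> (u', a')"
  shows "reduced_ham p q k m w1 w2 b u a < reduced_ham p q k m w1 w2 b u' a'"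
proof -
  have "(k*(u - u') + w1*(a - a'))^2 + w2^2*(a - a')^2 > 0"
  proof (cases "a = a'")
    case True
    with assms show ?thesis by simp
  next
    case False
    then have "w2^2*(a - a')^2 > 0" using \<open>w2 \<noteq> 0\<close> by simp
    then show ?thesis by (simp add: add_nonneg_pos)
  qed
  with \<open>b > 0\<close> have "b/2 * ((k*(u - u') + w1*(a - a'))^2 + w2^2*(a - a')^2) > 0" by simp
  with foc_a foc_u show ?thesis
    using reduced_ham_expansion[of p q k m w1 w2 b u a u' a'] by simp
qed

lemma investment_foc:
  fixes b k m w1 w2 u :: real
  defines "S \<equiv> w1^2 + w2^2"
  assumes "b > 0" "S > 0"
    and a_eq: "a = (m - b*k*u*w1) / (b*S)"
  shows "m - b*(k*u + a*w1)*w1 - b*a*w2^2 = 0"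
    and "(q - b*k*(k*u + a*w1)) * S = (q*S - k*w1*m) - b*k^2*w2^2 * u"
proof -
  have a: "a * (b*S) = m - b*k*u*w1" using assms(2,3) by (simp add: a_eq)
  then show "m - b*(k*u + a*w1)*w1 - b*a*w2^2 = 0"
    unfolding S_def by (simp add: algebra_simps power2_eq_square)
  from a have "k*w1*(a * (b*S)) = k*w1*(m - b*k*u*w1)" by simp
  then show "(q - b*k*(k*u + a*w1)) * S = (q*S - k*w1*m) - b*k^2*w2^2 * u"
    unfolding S_def by (simp add: algebra_simps power2_eq_square)
qed

lemma ustar_eq_clip_root:
  assumes "t \<in> {0..T}" "sig2 t y \<noteq> 0"
  shows "ustar T mu sig1 sig2 sig0 beta q t y =
    clip_root (q*((sig1 t y)^2 + (sig2 t y)^2) - sig0 * sig1 t y * mu t y)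
      (beta * sig0^2*(sig2 t y)^2)"
proof -
  have "(sig1 t y)^2 + (sig2 t y)^2 > 0" using assms(2) by (simp add: add_nonneg_pos)
  with assms(1) show ?thesis
    unfolding ustar_def A0_def A1_def clip_root_def
    by (simp add: pos_less_divide_eq pos_divide_less_eq algebra_simps power2_eq_square)
qed

lemma ustar_astar_first_order:
  fixes T sig0 beta q t y :: real and mu sig1 sig2 :: "real \<Rightarrow> real \<Rightarrow> real"
  defines "us \<equiv> ustar T mu sig1 sig2 sig0 beta q t y"
    and "as \<equiv> astar T mu sig1 sig2 sig0 beta q t y"
  assumes t: "t \<in> {0..T}" and "sig0 > 0" "beta > 0" "sig2 t y > 0"
  shows "us \<in> {0..1}"
    and "mu t y - beta*(sig0*us + as * sig1 t y) * sig1 t y - beta*as*(sig2 t y)^2 = 0"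
    and "\<And>u. u \<in> {0..1} \<Longrightarrow> (q - beta * sig0*(sig0*us + as * sig1 t y)) * (u - us) \<le> 0"
proof -
  define S where "S = (sig1 t y)^2 + (sig2 t y)^2"
  define \<gamma> where "\<gamma> = beta * sig0^2*(sig2 t y)^2"
  have S: "S > 0" and \<gamma>: "\<gamma> > 0"
    using assms(4-6) by (simp_all add: S_def \<gamma>_def add_nonneg_pos)
  have us: "us = clip_root (q*S - sig0 * sig1 t y * mu t y) \<gamma>"
    using ustar_eq_clip_root[OF t] assms(6) by (simp add: us_def S_def \<gamma>_def)
  then show "us \<in> {0..1}" using clip_root_mem[OF \<gamma>] by simp
  have foc: "mu t y - beta*(sig0*us + as * sig1 t y) * sig1 t y - beta*as*(sig2 t y)^2 = 0"
    "(q - beta * sig0*(sig0*us + as * sig1 t y)) * S = (q*S - sig0 * sig1 t y * mu t y) - \<gamma> * us"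
    using investment_foc[OF \<open>beta > 0\<close>, of "sig1 t y" "sig2 t y"] S
    by (simp_all add: S_def \<gamma>_def as_def astar_def us_def)
  show "mu t y - beta*(sig0*us + as * sig1 t y) * sig1 t y - beta*as*(sig2 t y)^2 = 0"
    by (fact foc(1))
  fix u :: real assume u: "u \<in> {0..1}"
  have "(q - beta * sig0*(sig0*us + as * sig1 t y)) * (u - us) * S
      = (q*S - sig0 * sig1 t y * mu t y - \<gamma> * us) * (u - us)"
    using foc(2) by (metis mult.commute mult.left_commute)
  also have "\<dots> \<le> 0" using clip_root_variational[OF \<gamma> u] by (simp add: us)
  finally show "(q - beta * sig0*(sig0*us + as * sig1 t y)) * (u - us) \<le> 0"
    using S by (simp add: mult_le_0_iff)
qed

lemma deriv_expU_scaled: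
  "deriv (\<lambda>\<xi>. expU beta \<xi> * K) = (\<lambda>z. beta * exp (- beta * z) * K)"
  "deriv (deriv (\<lambda>\<xi>. expU beta \<xi> * K)) x = - beta * (beta * exp (- beta * x) * K)"
proof -
  have "((\<lambda>\<xi>. expU beta \<xi> * K) has_real_derivative beta * exp (- beta * z) * K) (at z)" for z
    unfolding expU_def by (auto intro!: derivative_eq_intros)
  then show first: "deriv (\<lambda>\<xi>. expU beta \<xi> * K) = (\<lambda>z. beta * exp (- beta * z) * K)"
    using DERIV_imp_deriv by blast
  have "((\<lambda>z. beta * exp (- beta * z) * K) has_real_derivative - beta * (beta * exp (- beta * x) * K)) (at x)"
    by (auto intro!: derivative_eq_intros)
  then show "deriv (deriv (\<lambda>\<xi>. expU beta \<xi> * K)) x = - beta * (beta * exp (- beta * x) * K)"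
    unfolding first using DERIV_imp_deriv by blast
qed

lemma hjb_ham_proportional_reinsurance:
  "hjb_ham mu sig1 sig2 (\<lambda>t y u. p - q + q * u) (\<lambda>t y u. sig0 * u) t y c (- (beta * c)) u a
     = c * reduced_ham p q sig0 (mu t y) (sig1 t y) (sig2 t y) beta u a"
  unfolding hjb_ham_def reduced_ham_def by (simp add: algebra_simps)

theorem corollary5p3:
  fixes T p q sig0 beta :: real
    and mu sig1 sig2 :: "real \<Rightarrow> real \<Rightarrow> real"
    and Vt :: "real \<Rightarrow> real \<Rightarrow> real"
  assumes T_pos: "T > 0"
    and pq: "p < q" and sig0_pos: "sig0 > 0" and beta_pos: "beta > 0"
    and mu_pos: "\<And>t y. mu t y > 0"
    and sig1_pos: "\<And>t y. sig1 t y > 0"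
    and sig2_pos: "\<And>t y. sig2 t y > 0"
    and coef_bdd: "bounded2 mu" "bounded2 sig1" "bounded2 sig2"
    and coef_cont: "continuous_on UNIV (\<lambda>(t, y). mu t y)"
                   "continuous_on UNIV (\<lambda>(t, y). sig1 t y)"
                   "continuous_on UNIV (\<lambda>(t, y). sig2 t y)"
    and coef_lip: "lipschitz2 mu" "lipschitz2 sig1" "lipschitz2 sig2"
    and nondeg: "\<exists>c>0. \<forall>t y. sig1 t y + sig2 t y \<ge> c"
    and Vt_pos: "\<And>t y. Vt t y > 0"
  shows "\<forall>t\<in>{0..T}. \<forall>y x.
     (let V = (\<lambda>\<xi>. expU beta \<xi> * Vt t y);
          Vx = deriv V x; Vxx = deriv (deriv V) x;
          H = hjb_ham mu sig1 sig2 (\<lambda>t y u. p - q + q * u) (\<lambda>t y u. sig0 * u) t y Vx Vxx;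
          us = ustar T mu sig1 sig2 sig0 beta q t y;
          as = astar T mu sig1 sig2 sig0 beta q t y
      in us \<in> {0..1} \<and>
         (\<forall>u\<in>{0..1}. \<forall>a. (u, a) \<noteq> (us, as) \<longrightarrow> H u a < H us as))"
proof (intro ballI allI)
  fix t y x assume t: "t \<in> {0..T}"
  define us where "us = ustar T mu sig1 sig2 sig0 beta q t y"
  define as where "as = astar T mu sig1 sig2 sig0 beta q t y"
  define c where "c = beta * exp (- beta * x) * Vt t y"
  have c: "c > 0" using beta_pos Vt_pos[of t y] by (simp add: c_def)
  note foc = ustar_astar_first_order
    [where mu = mu and ?sig1.0 = sig1 and ?sig2.0 = sig2 and q = q and y = y,
     OF t sig0_pos beta_pos sig2_pos, folded us_def as_def]
  have "reduced_ham p q sig0 (mu t y) (sig1 t y) (sig2 t y) beta u a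
      < reduced_ham p q sig0 (mu t y) (sig1 t y) (sig2 t y) beta us as"
    if "u \<in> {0..1}" "(u, a) \<noteq> (us, as)" for u a
    using reduced_ham_strict_max[OF beta_pos _ _ foc(2) foc(3)] sig0_pos sig2_pos[of t y] that
    by simp
  moreover note foc(1)
  moreover have "deriv (\<lambda>\<xi>. expU beta \<xi> * Vt t y) x = c"
    and "deriv (deriv (\<lambda>\<xi>. expU beta \<xi> * Vt t y)) x = - beta * c"
    using deriv_expU_scaled(1)[of beta "Vt t y"] deriv_expU_scaled(2)[of beta "Vt t y" x]
    by (simp_all add: c_def)
  ultimately show "let V = (\<lambda>\<xi>. expU beta \<xi> * Vt t y);
          Vx = deriv V x; Vxx = deriv (deriv V) x;
          H = hjb_ham mu sig1 sig2 (\<lambda>t y u. p - q + q * u) (\<lambda>t y u. sig0 * u) t y Vx Vxx;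
          us = ustar T mu sig1 sig2 sig0 beta q t y;
          as = astar T mu sig1 sig2 sig0 beta q t y
      in us \<in> {0..1} \<and>
         (\<forall>u\<in>{0..1}. \<forall>a. (u, a) \<noteq> (us, as) \<longrightarrow> H u a < H us as)"
    unfolding Let_def us_def[symmetric] as_def[symmetric] using c
    by (auto simp: hjb_ham_proportional_reinsurance)
qed

end
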